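(* Fix a set of mean-field flows $\mathcal{S}=\{\mu^1,\dots,\mu^K\}$ and let $\pi^a,\pi^b\in\mathcal{B}^{\mathrm{RQE}}_{\mathrm{opt}}(\mathcal{S})$. Suppose there is $t\in\{0,\dots,T-1\}$ such that $Q^{\pi^a}_{\mu^k,t}(x,u)=Q^{\pi^b}_{\mu^k,t}(x,u)$ for all $x\in\mathcal{X}$, $u\in\mathcal{U}$, $k\in\{1,\dots,K\}$. Then (i) $\pi^a_t(\cdot\mid x)=\pi^b_t(\cdot\mid x)$ for all $x\in\mathcal{X}$, and (ii) if $t\ge1$, $Q^{\pi^a}_{\mu^k,t-1}(x,u)=Q^{\pi^b}_{\mu^k,t-1}(x,u)$ for all $x,u,k$.
   Context: Let $\mathcal{X},\mathcal{U}$ be finite nonempty sets and $T\ge1$. $\mathcal{P}(E)$ denotes probability vectors on a finite set $E$. For $t\in\{0,\dots,T-1\}$: transition kernels $f_t(x'\mid x,u,\mu)$ (a distribution over $x'$ for each $x,u$ and $\mu\in\mathcal{P}(\mathcal{X})$) and bounded rewards $r_t(x,u,\mu)$. A policy is $\pi=(\pi_0,\dots,\pi_{T-1})$ with $\pi_t(\cdot\mid x)\in\mathcal{P}(\mathcal{U})$; $\Pi_t$ the set of time-$t$ decision rules. A mean-field flow is a sequence $\mu=(\mu_0,\dots,\mu_T)$ in $\mathcal{P}(\mathcal{X})$. Q-functions: $Q^\pi_{\mu,T-1}(x,u)=r_{T-1}(x,u,\mu_{T-1})$, $Q^\pi_{\mu,t}(x,u)=r_t(x,u,\mu_t)+\sum_{x'}f_t(x'\mid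 x,u,\mu_t)V^\pi_{\mu,t+1}(x')$ for $t<T-1$, with $V^\pi_{\mu,t}(x)=\sum_u\pi_t(u\mid x)Q^\pi_{\mu,t}(x,u)$. Data: finite $\mathbb{M}=\{\mu_0^1,\dots,\mu_0^K\}\subset\mathcal{P}(\mathcal{X})$ with probabilities $w_k=\Gamma^*(\mu_0^k)$; $\tau>0$; $\alpha>0$; a strictly convex regularizer $\nu:\mathcal{P}(\mathcal{U})\to\mathbb{R}$. A set of flows $\mathcal{S}=\{\mu^1,\dots,\mu^K\}$ has $\mu^k$ starting at $\mu_0^k$. Cost: $c_t^{\pi,\alpha}(x;\mathcal{S})=\frac1\tau\log\big(\sum_kw_k\exp(-\tau\sum_u\pi_t(u\mid x)Q^\pi_{\mu^k,t}(x,u))\big)+\alpha\nu(\pi_t(\cdot\mid x))$. $(\pi'_t,\pi_{-t})$ denotes $\pi$ with time-$t$ component replaced by $\pi'_t\in\Pi_t$. $\mathcal{B}^{\mathrm{RQE}}_{\mathrm{opt}}(\mathcal{S})$ is the set of policies $\pi$ such that for all $t,x$, $\pi_t(\cdot\mid x)$ minimizes $c_t^{(\pi'_t,\pi_{-t}),\alpha}(x;\mathcal{S})$ over $\pi'_t\in\Pi_t$. *)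

theory Defs
  imports "HOL-Analysis.Analysis"
begin

definition prob_vec :: "('a::finite \<Rightarrow> real) \<Rightarrow> bool" where
  "prob_vec p \<longleftrightarrow> (\<forall>a. 0 \<le> p a) \<and> (\<Sum>a\<in>UNIV. p a) = 1"

definition decision_rule :: "('x::finite \<Rightarrow> 'u::finite \<Rightarrow> real) \<Rightarrow> bool" where
  "decision_rule d \<longleftrightarrow> (\<forall>x. prob_vec (d x))"

text \<open>A policy pol = (pi_0,...,pi_(T-1)); pol t x u is pi_t(u | x).\<close>
definition policy :: "nat \<Rightarrow> (nat \<Rightarrow> 'x::finite \<Rightarrow> 'u::finite \<Rightarrow> real) \<Rightarrow> bool" where
  "policy T pol \<longleftrightarrow> (\<forall>t<T. decision_rule (pol t))"

text \<open>Kernel: f t x u m x' = f_t(x' | x,u,m);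
  reward r t x u m = r_t(x,u,m); flow mu t = mu_t.  For t >= T-1 it is the terminal
  reward (only t <= T-1 is meaningful).  V^pi_{mu,t+1} is inlined.\<close>
function Qfun :: "nat \<Rightarrow> (nat \<Rightarrow> 'x::finite \<Rightarrow> 'u::finite \<Rightarrow> ('x \<Rightarrow> real) \<Rightarrow> 'x \<Rightarrow> real)
    \<Rightarrow> (nat \<Rightarrow> 'x \<Rightarrow> 'u \<Rightarrow> ('x \<Rightarrow> real) \<Rightarrow> real)
    \<Rightarrow> (nat \<Rightarrow> 'x \<Rightarrow> 'u \<Rightarrow> real) \<Rightarrow> (nat \<Rightarrow> 'x \<Rightarrow> real) \<Rightarrow> nat \<Rightarrow> 'x \<Rightarrow> 'u \<Rightarrow> real" where
  "Qfun T f r pol mu t x u =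
     (if T \<le> t + 1 then r t x u (mu t)
      else r t x u (mu t) +
        (\<Sum>x'\<in>UNIV. f t x u (mu t) x' *
           (\<Sum>u'\<in>UNIV. pol (t+1) x' u' * Qfun T f r pol mu (t+1) x' u')))"
  by pat_completeness auto
termination
  by (relation "Wellfounded.measure (\<lambda>(T,f,r,pol,mu,t,x,u). T - t)") auto

declare Qfun.simps [simp del]

definition Vfun where
  "Vfun T f r pol mu t x = (\<Sum>u\<in>UNIV. pol t x u * Qfun T f r pol mu t x u)"

definition cost ::
  "nat \<Rightarrow> (nat \<Rightarrow> 'x::finite \<Rightarrow> 'u::finite \<Rightarrow> ('x \<Rightarrow> real) \<Rightarrow> 'x \<Rightarrow> real)
    \<Rightarrow> (nat \<Rightarrow> 'x \<Rightarrow> 'u \<Rightarrow> ('x \<Rightarrow> real) \<Rightarrow> real)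
    \<Rightarrow> nat \<Rightarrow> (nat \<Rightarrow> real) \<Rightarrow> (nat \<Rightarrow> nat \<Rightarrow> 'x \<Rightarrow> real) \<Rightarrow> real \<Rightarrow> real
    \<Rightarrow> (('u \<Rightarrow> real) \<Rightarrow> real)
    \<Rightarrow> (nat \<Rightarrow> 'x \<Rightarrow> 'u \<Rightarrow> real) \<Rightarrow> nat \<Rightarrow> 'x \<Rightarrow> real" where
  "cost T f r K w mus tau alpha nu pol t x =
     (1 / tau) * ln (\<Sum>k\<in>{1..K}. w k *
        exp (- tau * (\<Sum>u\<in>UNIV. pol t x u * Qfun T f r pol (mus k) t x u)))
     + alpha * nu (pol t x)"

definition B_opt ::
  "nat \<Rightarrow> (nat \<Rightarrow> 'x::finite \<Rightarrow> 'u::finite \<Rightarrow> ('x \<Rightarrow> real) \<Rightarrow> 'x \<Rightarrow> real)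
    \<Rightarrow> (nat \<Rightarrow> 'x \<Rightarrow> 'u \<Rightarrow> ('x \<Rightarrow> real) \<Rightarrow> real)
    \<Rightarrow> nat \<Rightarrow> (nat \<Rightarrow> real) \<Rightarrow> (nat \<Rightarrow> nat \<Rightarrow> 'x \<Rightarrow> real) \<Rightarrow> real \<Rightarrow> real
    \<Rightarrow> (('u \<Rightarrow> real) \<Rightarrow> real) \<Rightarrow> (nat \<Rightarrow> 'x \<Rightarrow> 'u \<Rightarrow> real) set" where
  "B_opt T f r K w mus tau alpha nu =
     {pol. policy T pol \<and>
       (\<forall>t<T. \<forall>x. \<forall>d. decision_rule d \<longrightarrow>
          cost T f r K w mus tau alpha nu pol t x
            \<le> cost T f r K w mus tau alpha nu (pol(t := d)) t x)}"

definition strictly_convex_on_simplex :: "(('u::finite \<Rightarrow> real) \<Rightarrow> real) \<Rightarrow> bool" where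
  "strictly_convex_on_simplex nu \<longleftrightarrow>
     (\<forall>p q \<theta>. prob_vec p \<longrightarrow> prob_vec q \<longrightarrow> p \<noteq> q \<longrightarrow> 0 < \<theta> \<longrightarrow> \<theta> < 1 \<longrightarrow>
        nu (\<lambda>u. \<theta> * p u + (1 - \<theta>) * q u) < \<theta> * nu p + (1 - \<theta>) * nu q)"

end

theory Submission
  imports Defs
begin

text \<open>Since \<open>Q\<^sub>t\<close> depends only on the decision rules after \<open>t\<close>, the time-\<open>t\<close> cost at \<open>x\<close>,
  as a function of \<open>p = \<pi>\<^sub>t(\<cdot>|x)\<close>, is
  \<open>p \<mapsto> \<tau>\<^sup>-\<^sup>1 log \<Sum>\<^sub>k w\<^sub>k exp(-\<tau> \<langle>p, Q\<^sub>k(x,\<cdot>)\<rangle>) + \<alpha> \<nu>(p)\<close> with the \<open>Q\<^sub>k\<close> frozen.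
  Equal Q-functions at \<open>t\<close> make this the same function for \<open>\<pi>\<^sup>a\<close> and \<open>\<pi>\<^sup>b\<close>.
  Log-sum-exp is convex (by Cauchy-Schwarz) and \<open>\<nu>\<close> is strictly convex, so the function
  has at most one minimiser on the simplex, whence \<open>\<pi>\<^sup>a\<^sub>t = \<pi>\<^sup>b\<^sub>t\<close>. Part (ii) is then one
  step of the Bellman recursion for \<open>Q\<^sub>t\<^sub>-\<^sub>1\<close>.\<close>

lemma Qfun_cong_future:
  assumes "\<And>s. t < s \<Longrightarrow> pol s = pol' s"
  shows "Qfun T f r pol mu t x u = Qfun T f r pol' mu t x u"
  using assms
proof (induction T f r pol mu t x u rule: Qfun.induct)
  case (1 T f r pol mu t x u)
  then show ?case
    by (subst (1 2) Qfun.simps) simp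
qed

lemma Qfun_eq_if_next_eq:
  assumes "pol (t + 1) = pol' (t + 1)"
    and "\<And>x u. Qfun T f r pol mu (t + 1) x u = Qfun T f r pol' mu (t + 1) x u"
  shows "Qfun T f r pol mu t x u = Qfun T f r pol' mu t x u"
  using assms by (subst (1 2) Qfun.simps) simp

lemma sum_exp_midpoint_square_le:
  fixes w a b :: "'k \<Rightarrow> real"
  assumes "\<And>k. k \<in> I \<Longrightarrow> 0 \<le> w k"
  shows "(\<Sum>k\<in>I. w k * exp ((a k + b k) / 2))\<^sup>2
           \<le> (\<Sum>k\<in>I. w k * exp (a k)) * (\<Sum>k\<in>I. w k * exp (b k))"
proof -
  define g where "g c k = sqrt (w k) * exp (c k / 2)" for c k
  have "g c k ^ 2 = w k * exp (c k)" if "k \<in> I" for c k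
    using assms[OF that] by (simp add: g_def power_mult_distrib flip: exp_of_nat_mult)
  moreover have "g a k * g b k = w k * exp ((a k + b k) / 2)" if "k \<in> I" for k
    using assms[OF that] by (simp add: g_def add_divide_distrib exp_add)
  ultimately show ?thesis
    using Cauchy_Schwarz_ineq_sum[of "g a" "g b" I] by simp
qed

lemma ln_sum_exp_midpoint_le:
  fixes w a b :: "'k \<Rightarrow> real"
  assumes "finite I" and w_nonneg: "\<And>k. k \<in> I \<Longrightarrow> 0 \<le> w k" and "0 < (\<Sum>k\<in>I. w k)"
  shows "ln (\<Sum>k\<in>I. w k * exp ((a k + b k) / 2))
           \<le> (ln (\<Sum>k\<in>I. w k * exp (a k)) + ln (\<Sum>k\<in>I. w k * exp (b k))) / 2"
proof -
  have pos: "0 < (\<Sum>k\<in>I. w k * exp (c k))" for c :: "'k \<Rightarrow> real"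
  proof -
    have "\<exists>k\<in>I. w k \<noteq> 0"
      using \<open>0 < (\<Sum>k\<in>I. w k)\<close> sum.neutral by force
    then have "(\<Sum>k\<in>I. w k * exp (c k)) \<noteq> 0"
      using assms by (subst sum_nonneg_eq_0_iff) auto
    then show ?thesis
      using w_nonneg by (simp add: less_le sum_nonneg)
  qed
  have "2 * ln (\<Sum>k\<in>I. w k * exp ((a k + b k) / 2))
          = ln ((\<Sum>k\<in>I. w k * exp ((a k + b k) / 2))\<^sup>2)"
    using pos by (simp add: ln_realpow)
  also have "\<dots> \<le> ln ((\<Sum>k\<in>I. w k * exp (a k)) * (\<Sum>k\<in>I. w k * exp (b k)))"
    using pos[of "\<lambda>k. (a k + b k) / 2"] pos[of a] pos[of b]
      sum_exp_midpoint_square_le[of I w a b] w_nonneg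
    by (simp add: ln_le_cancel_iff)
  also have "\<dots> = ln (\<Sum>k\<in>I. w k * exp (a k)) + ln (\<Sum>k\<in>I. w k * exp (b k))"
    using pos[of a] pos[of b] by (simp add: ln_mult)
  finally show ?thesis by simp
qed

definition entropic_cost ::
  "real \<Rightarrow> real \<Rightarrow> (('u::finite \<Rightarrow> real) \<Rightarrow> real) \<Rightarrow> ('k \<Rightarrow> real) \<Rightarrow> 'k set
    \<Rightarrow> ('k \<Rightarrow> 'u \<Rightarrow> real) \<Rightarrow> ('u \<Rightarrow> real) \<Rightarrow> real" where
  "entropic_cost tau alpha nu w I Q p =
     (1 / tau) * ln (\<Sum>k\<in>I. w k * exp (- tau * (\<Sum>u\<in>UNIV. p u * Q k u))) + alpha * nu p"

lemma entropic_cost_cong: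
  "(\<And>k. k \<in> I \<Longrightarrow> Q k = Q' k)
     \<Longrightarrow> entropic_cost tau alpha nu w I Q = entropic_cost tau alpha nu w I Q'"
  unfolding entropic_cost_def
  by (intro ext arg_cong2[where f = "(+)"] refl arg_cong[where f = ln] sum.cong) simp_all

lemma entropic_cost_midpoint_less:
  fixes nu :: "('u::finite \<Rightarrow> real) \<Rightarrow> real"
  assumes weights: "finite I" "\<And>k. k \<in> I \<Longrightarrow> 0 \<le> w k" "0 < (\<Sum>k\<in>I. w k)"
    and "0 < tau" and "0 < alpha" and nu_sc: "strictly_convex_on_simplex nu"
    and "prob_vec p" and "prob_vec q" and "p \<noteq> q"
  shows "entropic_cost tau alpha nu w I Q (\<lambda>u. (p u + q u) / 2)
           < (entropic_cost tau alpha nu w I Q p + entropic_cost tau alpha nu w I Q q) / 2"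
proof -
  define a where "a k = - tau * (\<Sum>u\<in>UNIV. p u * Q k u)" for k
  define b where "b k = - tau * (\<Sum>u\<in>UNIV. q u * Q k u)" for k
  have mid: "- tau * (\<Sum>u\<in>UNIV. (p u + q u) / 2 * Q k u) = (a k + b k) / 2" for k
  proof -
    have "(\<Sum>u\<in>UNIV. (p u + q u) / 2 * Q k u)
        = ((\<Sum>u\<in>UNIV. p u * Q k u) + (\<Sum>u\<in>UNIV. q u * Q k u)) / 2"
      by (simp add: distrib_right sum.distrib flip: sum_divide_distrib)
    then show ?thesis
      unfolding a_def b_def by (simp add: field_simps)
  qed
  have "entropic_cost tau alpha nu w I Q (\<lambda>u. (p u + q u) / 2)
      = (1 / tau) * ln (\<Sum>k\<in>I. w k * exp ((a k + b k) / 2))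
        + alpha * nu (\<lambda>u. (p u + q u) / 2)"
    unfolding entropic_cost_def mid ..
  also have "\<dots> < (1 / tau) * ((ln (\<Sum>k\<in>I. w k * exp (a k))
                                  + ln (\<Sum>k\<in>I. w k * exp (b k))) / 2)
      + alpha * ((nu p + nu q) / 2)"
  proof (rule add_le_less_mono)
    show "(1 / tau) * ln (\<Sum>k\<in>I. w k * exp ((a k + b k) / 2))
        \<le> (1 / tau) * ((ln (\<Sum>k\<in>I. w k * exp (a k))
                            + ln (\<Sum>k\<in>I. w k * exp (b k))) / 2)"
      using ln_sum_exp_midpoint_le[of I w a b] weights \<open>0 < tau\<close>
      by (intro mult_left_mono) auto
    have "0 < (1 / 2 :: real)" "(1 / 2 :: real) < 1"
      by simp_all
    then have "nu (\<lambda>u. 1 / 2 * p u + (1 - 1 / 2) * q u) < 1 / 2 * nu p + (1 - 1 / 2) * nu q"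
      using nu_sc assms unfolding strictly_convex_on_simplex_def by blast
    then show "alpha * nu (\<lambda>u. (p u + q u) / 2) < alpha * ((nu p + nu q) / 2)"
      using \<open>0 < alpha\<close> by (simp add: add_divide_distrib)
  qed
  also have "\<dots> = (entropic_cost tau alpha nu w I Q p + entropic_cost tau alpha nu w I Q q) / 2"
    unfolding entropic_cost_def a_def b_def by (simp add: algebra_simps add_divide_distrib)
  finally show ?thesis .
qed

lemma entropic_cost_minimizer_unique:
  fixes nu :: "('u::finite \<Rightarrow> real) \<Rightarrow> real"
  assumes "finite I" and "\<And>k. k \<in> I \<Longrightarrow> 0 \<le> w k" and "0 < (\<Sum>k\<in>I. w k)"
    and "0 < tau" and "0 < alpha" and "strictly_convex_on_simplex nu"
    and p: "prob_vec p"
    and p_min: "\<And>d. prob_vec d \<Longrightarrow> entropic_cost tau alpha nu w I Q p \<le> entropic_cost tau alpha nu w I Q d"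
    and q: "prob_vec q"
    and q_min: "\<And>d. prob_vec d \<Longrightarrow> entropic_cost tau alpha nu w I Q q \<le> entropic_cost tau alpha nu w I Q d"
  shows "p = q"
proof (rule ccontr)
  assume "p \<noteq> q"
  have "prob_vec (\<lambda>u. (p u + q u) / 2)"
    using p q by (auto simp: prob_vec_def sum.distrib simp flip: sum_divide_distrib)
  then show False
    using entropic_cost_midpoint_less[OF assms(1-6) p q \<open>p \<noteq> q\<close>, of Q] p_min q_min
    by fastforce
qed

lemma cost_update_eq_entropic_cost:
  "cost T f r K w mus tau alpha nu (pol(t := d)) t x
     = entropic_cost tau alpha nu w {1..K} (\<lambda>k. Qfun T f r pol (mus k) t x) (d x)"
proof -
  have "Qfun T f r (pol(t := d)) (mus k) t x = Qfun T f r pol (mus k) t x" for k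
    by (intro ext Qfun_cong_future) simp
  then show ?thesis
    unfolding cost_def entropic_cost_def by simp
qed

lemma B_opt_prob_vec:
  "pol \<in> B_opt T f r K w mus tau alpha nu \<Longrightarrow> t < T \<Longrightarrow> prob_vec (pol t x)"
  unfolding B_opt_def policy_def decision_rule_def by blast

lemma B_opt_minimizes_entropic_cost:
  assumes opt: "pol \<in> B_opt T f r K w mus tau alpha nu" and "t < T" and "prob_vec p"
  shows "entropic_cost tau alpha nu w {1..K} (\<lambda>k. Qfun T f r pol (mus k) t x) (pol t x)
           \<le> entropic_cost tau alpha nu w {1..K} (\<lambda>k. Qfun T f r pol (mus k) t x) p"
proof -
  have "decision_rule ((pol t)(x := p))"
    using B_opt_prob_vec[OF opt \<open>t < T\<close>] \<open>prob_vec p\<close> unfolding decision_rule_def by simp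
  then have "cost T f r K w mus tau alpha nu (pol(t := pol t)) t x
      \<le> cost T f r K w mus tau alpha nu (pol(t := (pol t)(x := p))) t x"
    using opt \<open>t < T\<close> unfolding B_opt_def by simp
  then show ?thesis
    unfolding cost_update_eq_entropic_cost by simp
qed

theorem lemma1:
  fixes T K :: nat
    and f :: "nat \<Rightarrow> 'x::finite \<Rightarrow> 'u::finite \<Rightarrow> ('x \<Rightarrow> real) \<Rightarrow> 'x \<Rightarrow> real"
    and r :: "nat \<Rightarrow> 'x \<Rightarrow> 'u \<Rightarrow> ('x \<Rightarrow> real) \<Rightarrow> real"
    and mu0 :: "nat \<Rightarrow> 'x \<Rightarrow> real"
    and w :: "nat \<Rightarrow> real"
    and mus :: "nat \<Rightarrow> nat \<Rightarrow> 'x \<Rightarrow> real"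
    and tau alpha :: real
    and nu :: "('u \<Rightarrow> real) \<Rightarrow> real"
    and pia pib :: "nat \<Rightarrow> 'x \<Rightarrow> 'u \<Rightarrow> real"
    and t :: nat
  assumes T_pos: "1 \<le> T"
    and f_prob: "\<And>s x u m. s < T \<Longrightarrow> prob_vec m \<Longrightarrow> prob_vec (f s x u m)"
    and r_bdd: "\<And>s. s < T \<Longrightarrow> \<exists>B. \<forall>x u m. \<bar>r s x u m\<bar> \<le> B"
    and mu0_inj: "inj_on mu0 {1..K}"
    and mu0_prob: "\<And>k. k \<in> {1..K} \<Longrightarrow> prob_vec (mu0 k)"
    and w_nonneg: "\<And>k. k \<in> {1..K} \<Longrightarrow> 0 \<le> w k"
    and w_sum: "(\<Sum>k\<in>{1..K}. w k) = 1"
    and tau_pos: "0 < tau"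
    and alpha_pos: "0 < alpha"
    and nu_sc: "strictly_convex_on_simplex nu"
    and flows: "\<And>k s. k \<in> {1..K} \<Longrightarrow> s \<le> T \<Longrightarrow> prob_vec (mus k s)"
    and flows_start: "\<And>k. k \<in> {1..K} \<Longrightarrow> mus k 0 = mu0 k"
    and pia_opt: "pia \<in> B_opt T f r K w mus tau alpha nu"
    and pib_opt: "pib \<in> B_opt T f r K w mus tau alpha nu"
    and t_lt: "t < T"
    and Q_eq: "\<And>x u k. k \<in> {1..K} \<Longrightarrow>
                 Qfun T f r pia (mus k) t x u = Qfun T f r pib (mus k) t x u"
  shows "(\<forall>x. pia t x = pib t x) \<and>
         (1 \<le> t \<longrightarrow> (\<forall>x u. \<forall>k\<in>{1..K}.
             Qfun T f r pia (mus k) (t - 1) x u = Qfun T f r pib (mus k) (t - 1) x u))"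
proof -
  let ?J = "\<lambda>pol x. entropic_cost tau alpha nu w {1..K} (\<lambda>k. Qfun T f r pol (mus k) t x)"
  have J_eq: "?J pib x = ?J pia x" for x
    using Q_eq by (intro entropic_cost_cong ext) simp
  have rules_eq: "pia t x = pib t x" for x
  proof (rule entropic_cost_minimizer_unique)
    show "0 < (\<Sum>k\<in>{1..K}. w k)"
      using w_sum by simp
    show "?J pia x (pia t x) \<le> ?J pia x d" "?J pia x (pib t x) \<le> ?J pia x d"
      if "prob_vec d" for d
      using B_opt_minimizes_entropic_cost[OF pia_opt t_lt that]
        B_opt_minimizes_entropic_cost[OF pib_opt t_lt that] J_eq by simp_all
  qed (use w_nonneg tau_pos alpha_pos nu_sc B_opt_prob_vec pia_opt pib_opt t_lt in auto)
  moreover have "Qfun T f r pia (mus k) (t - 1) x u = Qfun T f r pib (mus k) (t - 1) x u"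
    if "1 \<le> t" "k \<in> {1..K}" for x u k
    using Qfun_eq_if_next_eq[of pia "t - 1" pib T f r "mus k"] rules_eq
      Q_eq[OF \<open>k \<in> {1..K}\<close>] \<open>1 \<le> t\<close>
    by auto
  ultimately show ?thesis
    by blast
qed

end
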